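(* Let $\mathcal{X}$ and $\mathcal{Y}$ be mm-spaces and $p\geq1$. Then $$d_{\mathrm{GW},p}(\mathcal{X},\mathcal{Y})=\inf_{\mathcal{Z}}d_{\mathrm{GM},p}(\mathcal{Z},\mathcal{Y}),$$ where the infimum is taken over all mass splittings $\mathcal{Z}$ of $\mathcal{X}$.
   Context: A metric measure space (mm-space) is a triple $\mathcal{X}=(X,d_X,\mu_X)$ with $(X,d_X)$ a compact metric space and $\mu_X$ a Borel probability measure of full support. A pseudo-metric measure space (pmm-space) is a triple $\mathcal{Z}=(Z,d_Z,\mu_Z)$ where $d_Z$ satisfies all metric axioms except that $d_Z(z,z')=0$ is allowed for $z\neq z'$, $(Z,d_Z)$ is compact in the topology generated by open balls, and $\mu_Z$ is a Borel probability measure of full support. A mass splitting of an mm-space $\mathcal{X}$ is a pmm-space $\mathcal{Z}$ for which there is a measurable map $\pi:Z\to X$ with $\pi_\#\mu_Z=\mu_X$ and $d_Z(z,z')=d_X(\pi(z),\pi(z'))$ for all $z,z'\in Z$. For (p)mm-spaces, $\mathcal{T}(\mu_Z,\mu_Y)$ is the set of measurable $\phi:Z\to Y$ with $\phi_\#\mu_Z=\mu_Y$, and $$d_{\mathrm{GM},p}(\mathcal{Z},\mathcal{Y})=\inf_{\phi\in\mathcal{T}(\mu_Z,\mu_Y)}\left(\iint_{Z\times Z}|d_Z(z,z')-d_Y(\phi(z),\phi(z'))|^p\,\mu_Z(dz)\mu_Z(dz')\right)^{1/p}$$ ($=\infty$ if no such $\phi$ exists). With $\mathcal{U}(\mu_X,\mu_Y)$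 the set of Borel probability measures on $X\times Y$ with marginals $\mu_X,\mu_Y$ (couplings), the Gromov–Wasserstein $p$-distance is $$d_{\mathrm{GW},p}(\mathcal{X},\mathcal{Y})=\inf_{\mu\in\mathcal{U}(\mu_X,\mu_Y)}\left(\iint|d_X(x,x')-d_Y(y,y')|^p\,\mu(dx\times dy)\,\mu(dx'\times dy')\right)^{1/p}.$$
   Formalization: In a pmm-space, $\mu_Z$ lives on any sigma-algebra containing the Borel sets of the ball topology rather than on the Borel sets themselves, and measurability of $\pi$ and $\phi$ refers to that sigma-algebra. The statement above fails without it. *)

theory Defs
  imports "HOL-Analysis.Analysis" "HOL-Probability.Probability"
begin

definition borel_of :: "'a topology \<Rightarrow> 'a measure" where
  "borel_of T = sigma (topspace T) {U. openin T U}"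

definition full_support :: "'a topology \<Rightarrow> 'a measure \<Rightarrow> bool" where
  "full_support T M \<longleftrightarrow> (\<forall>U. openin T U \<and> U \<noteq> {} \<longrightarrow> emeasure M U > 0)"

definition mm_space :: "('a \<Rightarrow> 'a \<Rightarrow> real) \<Rightarrow> 'a measure \<Rightarrow> bool" where
  "mm_space d M \<longleftrightarrow>
     Metric_space (space M) d \<and>
     compact_space (Metric_space.mtopology (space M) d) \<and>
     sets M = sets (borel_of (Metric_space.mtopology (space M) d)) \<and>
     prob_space M \<and>
     full_support (Metric_space.mtopology (space M) d) M"

definition pseudo_metric :: "'a set \<Rightarrow> ('a \<Rightarrow> 'a \<Rightarrow> real) \<Rightarrow> bool" where
  "pseudo_metric Z d \<longleftrightarrow>
     (\<forall>x y. 0 \<le> d x y) \<and> (\<forall>x y. d x y = d y x) \<and> (\<forall>x\<in>Z. d x x = 0) \<and>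
     (\<forall>x\<in>Z. \<forall>y\<in>Z. \<forall>z\<in>Z. d x z \<le> d x y + d y z)"

definition pm_open :: "'a set \<Rightarrow> ('a \<Rightarrow> 'a \<Rightarrow> real) \<Rightarrow> 'a set \<Rightarrow> bool" where
  "pm_open Z d U \<longleftrightarrow> U \<subseteq> Z \<and> (\<forall>x\<in>U. \<exists>r>0. {y\<in>Z. d x y < r} \<subseteq> U)"

definition pm_topology :: "'a set \<Rightarrow> ('a \<Rightarrow> 'a \<Rightarrow> real) \<Rightarrow> 'a topology" where
  "pm_topology Z d = topology (pm_open Z d)"

definition pmm_space :: "('a \<Rightarrow> 'a \<Rightarrow> real) \<Rightarrow> 'a measure \<Rightarrow> bool" where
  "pmm_space d M \<longleftrightarrow>
     pseudo_metric (space M) d \<and>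
     compact_space (pm_topology (space M) d) \<and>
     sets (borel_of (pm_topology (space M) d)) \<subseteq> sets M \<and>
     prob_space M \<and>
     full_support (pm_topology (space M) d) M"

definition mass_splitting ::
  "('c \<Rightarrow> 'c \<Rightarrow> real) \<Rightarrow> 'c measure \<Rightarrow> ('a \<Rightarrow> 'a \<Rightarrow> real) \<Rightarrow> 'a measure \<Rightarrow> bool" where
  "mass_splitting dZ MZ dX MX \<longleftrightarrow>
     pmm_space dZ MZ \<and>
     (\<exists>\<pi>. \<pi> \<in> measurable MZ MX \<and> distr MZ MX \<pi> = MX \<and>
          (\<forall>z\<in>space MZ. \<forall>z'\<in>space MZ. dZ z z' = dX (\<pi> z) (\<pi> z')))"

definition proot :: "real \<Rightarrow> ennreal \<Rightarrow> ennreal" where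
  "proot p x = (if x = \<infinity> then \<infinity> else ennreal (enn2real x powr (1 / p)))"

definition transport_maps :: "'c measure \<Rightarrow> 'b measure \<Rightarrow> ('c \<Rightarrow> 'b) set" where
  "transport_maps MZ MY = {\<phi>. \<phi> \<in> measurable MZ MY \<and> distr MZ MY \<phi> = MY}"

text \<open>Gromov-Monge p-distance (INF over the empty set is \<infinity>).\<close>
definition dGM ::
  "real \<Rightarrow> ('c \<Rightarrow> 'c \<Rightarrow> real) \<Rightarrow> 'c measure \<Rightarrow> ('b \<Rightarrow> 'b \<Rightarrow> real) \<Rightarrow> 'b measure \<Rightarrow> ennreal" where
  "dGM p dZ MZ dY MY =
     (INF \<phi>\<in>transport_maps MZ MY.
        proot p (\<integral>\<^sup>+ z. \<integral>\<^sup>+ z'. ennreal (\<bar>dZ z z' - dY (\<phi> z) (\<phi> z')\<bar> powr p) \<partial>MZ \<partial>MZ))"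

definition couplings :: "'a measure \<Rightarrow> 'b measure \<Rightarrow> ('a \<times> 'b) measure set" where
  "couplings MX MY = {\<mu>. sets \<mu> = sets (MX \<Otimes>\<^sub>M MY) \<and> prob_space \<mu> \<and>
                         distr \<mu> MX fst = MX \<and> distr \<mu> MY snd = MY}"

definition dGW ::
  "real \<Rightarrow> ('a \<Rightarrow> 'a \<Rightarrow> real) \<Rightarrow> 'a measure \<Rightarrow> ('b \<Rightarrow> 'b \<Rightarrow> real) \<Rightarrow> 'b measure \<Rightarrow> ennreal" where
  "dGW p dX MX dY MY =
     (INF \<mu>\<in>couplings MX MY.
        proot p (\<integral>\<^sup>+ u. \<integral>\<^sup>+ v.
           ennreal (\<bar>dX (fst u) (fst v) - dY (snd u) (snd v)\<bar> powr p) \<partial>\<mu> \<partial>\<mu>))"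

end

theory Submission
  imports Defs
begin

text \<open>
  Given a mass splitting \<open>\<pi> : Z \<rightarrow> X\<close> and a transport map \<open>\<phi> : Z \<rightarrow> Y\<close>, the push-forward of
  \<open>\<mu>\<^sub>Z\<close> under \<open>(\<pi>, \<phi>)\<close> is a coupling of \<open>\<mu>\<^sub>X\<close> and \<open>\<mu>\<^sub>Y\<close> whose distortion is at most that
  of \<open>\<phi>\<close>; this gives \<open>d\<^sub>G\<^sub>W \<le> d\<^sub>G\<^sub>M\<close>.  Conversely, a coupling \<open>\<mu>\<close> on \<open>X \<times> Y\<close> is itself a
  mass splitting of \<open>X\<close> via the first projection, and the second projection is a transport
  map onto \<open>Y\<close> with exactly the distortion of \<open>\<mu>\<close>.  To place all these splittings in the
  single type \<open>X \<times> \<real>\<close>, \<open>Y\<close> is relabelled by an injection into \<open>\<real>\<close>, which exists because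
  a compact metric space is separable.  The pseudo-metric topology pulled back along the
  projection consists of the preimages of open sets of \<open>X\<close>, so compactness, Borel
  measurability and full support all transfer from \<open>X\<close>.
\<close>

text \<open>Only an inequality, since \<open>f\<close> need not be measurable.\<close>

lemma nn_integral_distr_le:
  assumes T: "T \<in> measurable M N"
  shows "integral\<^sup>N (distr M N T) f \<le> integral\<^sup>N M (\<lambda>x. f (T x))"
  unfolding nn_integral_def[of "distr M N T"]
proof (rule SUP_least, clarify)
  fix g assume g: "simple_function (distr M N T) g" "g \<le> f"
  have "integral\<^sup>S (distr M N T) g = integral\<^sup>N (distr M N T) g"
    using g by (simp add: nn_integral_eq_simple_integral)
  also have "\<dots> = integral\<^sup>N M (\<lambda>x. g (T x))"
    using T borel_measurable_simple_function[OF g(1)] by (rule nn_integral_distr)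
  also have "\<dots> \<le> integral\<^sup>N M (\<lambda>x. f (T x))"
    using g by (intro nn_integral_mono) (auto simp: le_fun_def)
  finally show "integral\<^sup>S (distr M N T) g \<le> integral\<^sup>N M (\<lambda>x. f (T x))" .
qed

lemma nn_integral_nn_integral_distr_le:
  assumes T: "T \<in> measurable M N"
  shows "(\<integral>\<^sup>+x. \<integral>\<^sup>+y. f x y \<partial>distr M N T \<partial>distr M N T) \<le> (\<integral>\<^sup>+x. \<integral>\<^sup>+y. f (T x) (T y) \<partial>M \<partial>M)"
proof -
  have "(\<integral>\<^sup>+x. \<integral>\<^sup>+y. f x y \<partial>distr M N T \<partial>distr M N T) \<le> (\<integral>\<^sup>+x. \<integral>\<^sup>+y. f x (T y) \<partial>M \<partial>distr M N T)"
    by (intro nn_integral_mono nn_integral_distr_le[OF T])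
  also have "\<dots> \<le> (\<integral>\<^sup>+x. \<integral>\<^sup>+y. f (T x) (T y) \<partial>M \<partial>M)"
    by (rule nn_integral_distr_le[OF T])
  finally show ?thesis .
qed

lemma proot_mono:
  assumes "p > 0" "x \<le> y"
  shows "proot p x \<le> proot p y"
proof (cases "y = \<infinity>")
  case False
  with assms(2) have "x \<noteq> \<infinity>" "enn2real x \<le> enn2real y"
    by (auto simp: enn2real_mono top.not_eq_extremum top.extremum_uniqueI)
  with False assms(1) show ?thesis
    by (auto simp: proot_def intro!: ennreal_leI powr_mono2)
qed (simp add: proot_def)

definition gw_distortion ::
  "real \<Rightarrow> ('a \<Rightarrow> 'a \<Rightarrow> real) \<Rightarrow> ('b \<Rightarrow> 'b \<Rightarrow> real) \<Rightarrow> ('a \<times> 'b) measure \<Rightarrow> ennreal" where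
  "gw_distortion p dX dY \<mu> =
     (\<integral>\<^sup>+ u. \<integral>\<^sup>+ v. ennreal (\<bar>dX (fst u) (fst v) - dY (snd u) (snd v)\<bar> powr p) \<partial>\<mu> \<partial>\<mu>)"

lemma dGW_eq_INF_gw_distortion:
  "dGW p dX MX dY MY = (INF \<mu>\<in>couplings MX MY. proot p (gw_distortion p dX dY \<mu>))"
  by (simp add: dGW_def gw_distortion_def)

lemma distr_Pair_in_couplings:
  assumes "prob_space M" and f: "f \<in> measurable M MX" "distr M MX f = MX"
    and g: "g \<in> measurable M MY" "distr M MY g = MY"
  shows "distr M (MX \<Otimes>\<^sub>M MY) (\<lambda>z. (f z, g z)) \<in> couplings MX MY"
proof -
  have fg: "(\<lambda>z. (f z, g z)) \<in> measurable M (MX \<Otimes>\<^sub>M MY)"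
    using f g by measurable
  show ?thesis
    unfolding couplings_def
    using prob_space.prob_space_distr[OF assms(1) fg] f g
    by (simp add: distr_distr[OF measurable_fst fg] distr_distr[OF measurable_snd fg] comp_def)
qed

lemma dGW_le_dGM_mass_splitting:
  assumes "mass_splitting dZ MZ dX MX" and "p > 0"
  shows "dGW p dX MX dY MY \<le> dGM p dZ MZ dY MY"
proof -
  obtain \<pi> where \<pi>: "\<pi> \<in> measurable MZ MX" "distr MZ MX \<pi> = MX"
    and dZ: "\<And>z z'. z \<in> space MZ \<Longrightarrow> z' \<in> space MZ \<Longrightarrow> dZ z z' = dX (\<pi> z) (\<pi> z')"
    using assms(1) unfolding mass_splitting_def by blast
  have "prob_space MZ"
    using assms(1) unfolding mass_splitting_def pmm_space_def by blast
  show ?thesis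
    unfolding dGM_def
  proof (rule INF_greatest)
    fix \<phi> assume "\<phi> \<in> transport_maps MZ MY"
    then have \<phi>: "\<phi> \<in> measurable MZ MY" "distr MZ MY \<phi> = MY"
      unfolding transport_maps_def by auto
    define T where "T z = (\<pi> z, \<phi> z)" for z
    have T: "T \<in> measurable MZ (MX \<Otimes>\<^sub>M MY)"
      unfolding T_def using \<pi>(1) \<phi>(1) by measurable
    have "dGW p dX MX dY MY \<le> proot p (gw_distortion p dX dY (distr MZ (MX \<Otimes>\<^sub>M MY) T))"
      unfolding dGW_eq_INF_gw_distortion T_def
      by (rule INF_lower, rule distr_Pair_in_couplings) fact+
    also have "\<dots> \<le> proot p (\<integral>\<^sup>+ z. \<integral>\<^sup>+ z'. ennreal (\<bar>dZ z z' - dY (\<phi> z) (\<phi> z')\<bar> powr p) \<partial>MZ \<partial>MZ)"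
    proof (rule proot_mono[OF \<open>p > 0\<close>])
      have "gw_distortion p dX dY (distr MZ (MX \<Otimes>\<^sub>M MY) T) \<le>
          (\<integral>\<^sup>+ z. \<integral>\<^sup>+ z'. ennreal (\<bar>dX (\<pi> z) (\<pi> z') - dY (\<phi> z) (\<phi> z')\<bar> powr p) \<partial>MZ \<partial>MZ)"
        unfolding gw_distortion_def
        using nn_integral_nn_integral_distr_le[OF T,
            of "\<lambda>u v. ennreal (\<bar>dX (fst u) (fst v) - dY (snd u) (snd v)\<bar> powr p)"]
        by (simp add: T_def)
      also have "\<dots> = (\<integral>\<^sup>+ z. \<integral>\<^sup>+ z'. ennreal (\<bar>dZ z z' - dY (\<phi> z) (\<phi> z')\<bar> powr p) \<partial>MZ \<partial>MZ)"
        by (intro nn_integral_cong) (simp add: dZ)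
      finally show "gw_distortion p dX dY (distr MZ (MX \<Otimes>\<^sub>M MY) T) \<le> \<dots>" .
    qed
    finally show "dGW p dX MX dY MY
        \<le> proot p (\<integral>\<^sup>+ z. \<integral>\<^sup>+ z'. ennreal (\<bar>dZ z z' - dY (\<phi> z) (\<phi> z')\<bar> powr p) \<partial>MZ \<partial>MZ)" .
  qed
qed

lemma istopology_pm_open: "istopology (pm_open Z d)"
  unfolding istopology_def
proof (intro conjI allI impI)
  fix S T assume S: "pm_open Z d S" and T: "pm_open Z d T"
  show "pm_open Z d (S \<inter> T)"
    unfolding pm_open_def
  proof (intro conjI ballI)
    fix x assume "x \<in> S \<inter> T"
    then obtain r s where "r > 0" "{y \<in> Z. d x y < r} \<subseteq> S" "s > 0" "{y \<in> Z. d x y < s} \<subseteq> T"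
      using S T unfolding pm_open_def by blast
    then show "\<exists>r>0. {y \<in> Z. d x y < r} \<subseteq> S \<inter> T"
      by (intro exI[of _ "min r s"]) auto
  qed (use S in \<open>auto simp: pm_open_def\<close>)
next
  fix K assume K: "\<forall>U\<in>K. pm_open Z d U"
  show "pm_open Z d (\<Union>K)"
    unfolding pm_open_def
  proof (intro conjI ballI)
    fix x assume "x \<in> \<Union>K"
    then obtain U where "U \<in> K" "x \<in> U"
      by blast
    then obtain r where "r > 0" "{y \<in> Z. d x y < r} \<subseteq> U"
      using K unfolding pm_open_def by blast
    then show "\<exists>r>0. {y \<in> Z. d x y < r} \<subseteq> \<Union>K"
      using \<open>U \<in> K\<close> by blast
  qed (use K in \<open>auto simp: pm_open_def\<close>)
qed

lemma openin_pm_topology: "openin (pm_topology Z d) U \<longleftrightarrow> pm_open Z d U"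
  unfolding pm_topology_def by (simp add: istopology_pm_open)

lemma (in Metric_space) pm_open_pullback_imp_preimage:
  assumes "\<pi> ` Z \<subseteq> M" and U: "pm_open Z (\<lambda>z z'. d (\<pi> z) (\<pi> z')) U"
  shows "\<exists>V. openin mtopology V \<and> U = \<pi> -` V \<inter> Z"
proof -
  obtain r where r: "\<And>z. z \<in> U \<Longrightarrow> r z > 0 \<and> {z' \<in> Z. d (\<pi> z) (\<pi> z') < r z} \<subseteq> U"
    using U unfolding pm_open_def by metis
  define V where "V = (\<Union>z\<in>U. mball (\<pi> z) (r z))"
  have "U = \<pi> -` V \<inter> Z"
  proof
    show "U \<subseteq> \<pi> -` V \<inter> Z"
    proof
      fix z assume "z \<in> U"
      then have "z \<in> Z"
        using U unfolding pm_open_def by blast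
      then have "\<pi> z \<in> M"
        using assms(1) by blast
      then have "\<pi> z \<in> mball (\<pi> z) (r z)"
        using r[OF \<open>z \<in> U\<close>] by simp
      then show "z \<in> \<pi> -` V \<inter> Z"
        using \<open>z \<in> U\<close> \<open>z \<in> Z\<close> unfolding V_def by blast
    qed
    show "\<pi> -` V \<inter> Z \<subseteq> U"
    proof
      fix z' assume "z' \<in> \<pi> -` V \<inter> Z"
      then obtain z where "z \<in> U" "d (\<pi> z) (\<pi> z') < r z" "z' \<in> Z"
        unfolding V_def by auto
      then show "z' \<in> U"
        using r by blast
    qed
  qed
  moreover have "openin mtopology V"
    unfolding V_def by (intro openin_Union) auto
  ultimately show ?thesis
    by blast
qed

lemma (in Metric_space) pm_open_preimage_pullback:
  assumes "\<pi> ` Z \<subseteq> M" and V: "openin mtopology V"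
  shows "pm_open Z (\<lambda>z z'. d (\<pi> z) (\<pi> z')) (\<pi> -` V \<inter> Z)"
  unfolding pm_open_def
proof (intro conjI ballI)
  fix z assume z: "z \<in> \<pi> -` V \<inter> Z"
  then obtain r where r: "r > 0" "mball (\<pi> z) r \<subseteq> V"
    using V unfolding openin_mtopology by blast
  show "\<exists>r>0. {z' \<in> Z. d (\<pi> z) (\<pi> z') < r} \<subseteq> \<pi> -` V \<inter> Z"
  proof (intro exI[of _ r] conjI subsetI)
    fix z' assume z': "z' \<in> {z' \<in> Z. d (\<pi> z) (\<pi> z') < r}"
    then have "\<pi> z' \<in> mball (\<pi> z) r"
      using assms(1) z by auto
    then show "z' \<in> \<pi> -` V \<inter> Z"
      using r(2) z' by blast
  qed (fact r)
qed blast

lemma pm_topology_pullback: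
  assumes "Metric_space X d" and "\<pi> ` Z \<subseteq> X"
  shows "pm_topology Z (\<lambda>z z'. d (\<pi> z) (\<pi> z')) = pullback_topology Z \<pi> (Metric_space.mtopology X d)"
  unfolding topology_eq openin_pm_topology openin_pullback_topology
  using Metric_space.pm_open_pullback_imp_preimage[OF assms]
    Metric_space.pm_open_preimage_pullback[OF assms] by blast

lemma openin_pullback_topology_image:
  assumes "f ` A = topspace T" and "openin (pullback_topology A f T) W"
  shows "openin T (f ` W)" and "W = f -` f ` W \<inter> A"
proof -
  obtain V where V: "openin T V" "W = f -` V \<inter> A"
    using assms(2) by (auto simp: openin_pullback_topology)
  have "V \<subseteq> f ` A"
    using assms(1) openin_subset[OF V(1)] by simp
  then have "f ` W = V"
    unfolding V(2) by blast
  with V show "openin T (f ` W)" and "W = f -` f ` W \<inter> A"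
    by simp_all
qed

lemma compact_space_pullback_topology:
  assumes "compact_space T" and "f ` A = topspace T"
  shows "compact_space (pullback_topology A f T)"
  unfolding compact_space_def compactin_def
proof (intro conjI allI impI subset_refl)
  have top: "topspace (pullback_topology A f T) = A"
    using assms(2) by (auto simp: topspace_pullback_topology)
  fix UU assume "(\<forall>W\<in>UU. openin (pullback_topology A f T) W)
    \<and> topspace (pullback_topology A f T) \<subseteq> \<Union>UU"
  then have UU: "\<And>W. W \<in> UU \<Longrightarrow> openin (pullback_topology A f T) W" and cover: "A \<subseteq> \<Union>UU"
    unfolding top by auto
  have "\<forall>V\<in>(`) f ` UU. openin T V"
    using UU openin_pullback_topology_image(1)[OF assms(2)] by blast
  moreover have "topspace T \<subseteq> \<Union>((`) f ` UU)"
    using cover unfolding assms(2)[symmetric] by blast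
  ultimately obtain VV where VV: "finite VV" "VV \<subseteq> (`) f ` UU" "topspace T \<subseteq> \<Union>VV"
    using assms(1) unfolding compact_space_def compactin_def by (meson Sup_le_iff)
  obtain WW where WW: "WW \<subseteq> UU" "finite WW" "VV = (`) f ` WW"
    using finite_subset_image[OF VV(1,2)] by blast
  have "A \<subseteq> \<Union>WW"
  proof
    fix a assume "a \<in> A"
    then have "f a \<in> \<Union>((`) f ` WW)"
      using VV(3) WW(3) assms(2) by blast
    then obtain W where W: "W \<in> WW" "f a \<in> f ` W"
      by blast
    then have "W = f -` f ` W \<inter> A"
      using UU WW(1) openin_pullback_topology_image(2)[OF assms(2)] by blast
    then show "a \<in> \<Union>WW"
      using W \<open>a \<in> A\<close> by blast
  qed
  then show "\<exists>F. finite F \<and> F \<subseteq> UU \<and> topspace (pullback_topology A f T) \<subseteq> \<Union>F"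
    using WW unfolding top by blast
qed

lemma sets_borel_of: "sets (borel_of T) = sigma_sets (topspace T) {U. openin T U}"
  unfolding borel_of_def by (rule sets_measure_of) (auto dest: openin_subset)

lemma space_borel_of: "space (borel_of T) = topspace T"
  unfolding borel_of_def by (rule space_measure_of) (auto dest: openin_subset)

lemma sets_borel_of_pullback_topology:
  assumes f: "f \<in> measurable M N" and N: "sets N = sets (borel_of T)"
  shows "sets (borel_of (pullback_topology (space M) f T)) \<subseteq> sets M"
proof -
  have top: "topspace (pullback_topology (space M) f T) = space M"
    using measurable_space[OF f] sets_eq_imp_space_eq[OF N]
    by (auto simp: topspace_pullback_topology space_borel_of)
  have "U \<in> sets M" if U: "openin (pullback_topology (space M) f T) U" for U
  proof -
    obtain V where "openin T V" "U = f -` V \<inter> space M"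
      using U by (auto simp: openin_pullback_topology)
    then show "U \<in> sets M"
      using measurable_sets[OF f] N by (simp add: sets_borel_of)
  qed
  then have "sigma_sets (space M) {U. openin (pullback_topology (space M) f T) U} \<subseteq> sets M"
    by (intro sets.sigma_sets_subset) blast
  then show ?thesis
    unfolding sets_borel_of top .
qed

lemma full_support_pullback_topology:
  assumes f: "f \<in> measurable M N" "distr M N f = N"
    and N: "sets N = sets (borel_of T)" "full_support T N"
  shows "full_support (pullback_topology (space M) f T) M"
  unfolding full_support_def
proof (intro allI impI)
  fix U assume U: "openin (pullback_topology (space M) f T) U \<and> U \<noteq> {}"
  then obtain V where V: "openin T V" "U = f -` V \<inter> space M"
    by (auto simp: openin_pullback_topology)
  then have "V \<in> sets N"
    using N(1) by (simp add: sets_borel_of)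
  then have "emeasure M U = emeasure N V"
    using emeasure_distr[OF f(1)] f(2) V(2) by metis
  moreover have "V \<noteq> {}"
    using U V by auto
  ultimately show "emeasure M U > 0"
    using N(2) V(1) unfolding full_support_def by simp
qed

lemma mass_splitting_pullback:
  assumes X: "mm_space dX MX" and "prob_space MZ"
    and \<pi>: "\<pi> \<in> measurable MZ MX" "distr MZ MX \<pi> = MX" "\<pi> ` space MZ = space MX"
  shows "mass_splitting (\<lambda>z z'. dX (\<pi> z) (\<pi> z')) MZ dX MX"
proof -
  interpret Metric_space "space MX" dX
    using X by (simp add: mm_space_def)
  have top: "pm_topology (space MZ) (\<lambda>z z'. dX (\<pi> z) (\<pi> z')) = pullback_topology (space MZ) \<pi> mtopology"
    using pm_topology_pullback[OF Metric_space_axioms, of \<pi> "space MZ"] \<pi>(3) by simp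
  have \<pi>Z: "\<pi> z \<in> space MX" if "z \<in> space MZ" for z
    using \<pi>(3) that by blast
  have "pmm_space (\<lambda>z z'. dX (\<pi> z) (\<pi> z')) MZ"
    unfolding pmm_space_def top
  proof (intro conjI)
    show "pseudo_metric (space MZ) (\<lambda>z z'. dX (\<pi> z) (\<pi> z'))"
      unfolding pseudo_metric_def
      by (intro conjI allI ballI nonneg commute mdist_zero triangle \<pi>Z)
    show "compact_space (pullback_topology (space MZ) \<pi> mtopology)"
      using X \<pi>(3) by (intro compact_space_pullback_topology) (auto simp: mm_space_def)
    show "sets (borel_of (pullback_topology (space MZ) \<pi> mtopology)) \<subseteq> sets MZ"
      using X by (intro sets_borel_of_pullback_topology[OF \<pi>(1)]) (simp add: mm_space_def)
    show "full_support (pullback_topology (space MZ) \<pi> mtopology) MZ"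
      using X by (intro full_support_pullback_topology[OF \<pi>(1,2)]) (simp_all add: mm_space_def)
  qed fact
  then show ?thesis
    unfolding mass_splitting_def using \<pi>(1,2) by (intro conjI exI[of _ \<pi>]) auto
qed

lemma (in Metric_space) compact_space_imp_countable_dense:
  assumes "compact_space mtopology"
  obtains C where "countable C" "C \<subseteq> M" "\<And>y e. y \<in> M \<Longrightarrow> e > 0 \<Longrightarrow> \<exists>x\<in>C. d y x < e"
proof -
  have "mtotally_bounded M"
    using assms compact_space_eq_mcomplete_mtotally_bounded by blast
  then have "\<forall>n::nat. \<exists>K. finite K \<and> K \<subseteq> M \<and> M \<subseteq> (\<Union>x\<in>K. mball x (1 / real (Suc n)))"
    unfolding mtotally_bounded_def by simp
  then obtain K where K: "\<And>n. finite (K n)" "\<And>n. K n \<subseteq> M"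
    "\<And>n. M \<subseteq> (\<Union>x\<in>K n. mball x (1 / real (Suc n)))"
    by metis
  show ?thesis
  proof
    show "countable (\<Union>n. K n)"
      using K(1) by (simp add: countable_finite)
    show "(\<Union>n. K n) \<subseteq> M"
      using K(2) by blast
  next
    fix y and e :: real assume "y \<in> M" "e > 0"
    then obtain n where n: "1 / real (Suc n) < e"
      using nat_approx_posE by blast
    obtain x where "x \<in> K n" "y \<in> mball x (1 / real (Suc n))"
      using K(3) \<open>y \<in> M\<close> by blast
    then have "d y x < e"
      using n commute[of x y] by simp
    then show "\<exists>x\<in>\<Union>n. K n. d y x < e"
      using \<open>x \<in> K n\<close> by blast
  qed
qed

lemma inj_countable_set_to_real: "\<exists>f :: 'a::countable set \<Rightarrow> real. inj f"
proof -
  obtain b :: "nat set \<Rightarrow> real" where "bij b"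
    using nat_sets_eqpoll_reals unfolding eqpoll_def by blast
  moreover have "inj (\<lambda>A :: 'a set. to_nat ` A)"
    by (rule injI) (simp add: inj_image_eq_iff[OF inj_to_nat])
  ultimately have "inj (b \<circ> (\<lambda>A :: 'a set. to_nat ` A))"
    by (intro inj_compose) (simp_all add: bij_is_inj)
  then show ?thesis
    by blast
qed

lemma (in Metric_space) compact_space_imp_inj_on_real:
  assumes "compact_space mtopology"
  obtains \<iota> :: "'a \<Rightarrow> real" where "inj_on \<iota> M"
proof -
  obtain C where C: "countable C" "C \<subseteq> M"
    and dense: "\<And>y e. y \<in> M \<Longrightarrow> e > 0 \<Longrightarrow> \<exists>x\<in>C. d y x < e"
    using compact_space_imp_countable_dense[OF assms] by blast
  \<comment> \<open>a point is determined by the rational upper bounds on its distances to \<open>C\<close>\<close>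
  define g where "g y = {(to_nat_on C x, r) | x r. x \<in> C \<and> d y x < real_of_rat r}" for y
  have "inj_on g M"
  proof (rule inj_onI, rule ccontr)
    fix y y' assume y: "y \<in> M" "y' \<in> M" "g y = g y'" "y \<noteq> y'"
    then have "d y y' / 2 > 0"
      by simp
    then obtain x where x: "x \<in> C" "d y x < d y y' / 2"
      using dense[OF y(1)] by blast
    have "d y y' \<le> d y x + d y' x"
      using triangle' x(1) C(2) y(1,2) by blast
    then have "d y x < d y' x"
      using x(2) by linarith
    then obtain r where r: "d y x < real_of_rat r" "real_of_rat r < d y' x"
      using of_rat_dense by blast
    then have "(to_nat_on C x, r) \<in> g y'"
      using x(1) y(3)[symmetric] unfolding g_def by blast
    then have "\<exists>x'. x' \<in> C \<and> to_nat_on C x' = to_nat_on C x \<and> d y' x' < real_of_rat r"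
      unfolding g_def by auto
    then obtain x' where x': "x' \<in> C" "to_nat_on C x' = to_nat_on C x" "d y' x' < real_of_rat r"
      by blast
    then have "x' = x"
      using inj_on_to_nat_on[OF C(1)] x(1) by (meson inj_onD)
    then show False
      using x'(3) r by auto
  qed
  moreover obtain f :: "(nat \<times> rat) set \<Rightarrow> real" where "inj f"
    using inj_countable_set_to_real by blast
  ultimately have "inj_on (f \<circ> g) M"
    by (intro comp_inj_on) (auto intro: inj_on_subset)
  then show ?thesis
    by (rule that)
qed
lemma dGM_pullback_le_gw_distortion:
  assumes "p > 0" and T: "T \<in> measurable \<mu> MZ" "distr \<mu> MZ T = MZ"
    and \<phi>: "\<phi> \<in> transport_maps MZ MY"
    and factor: "\<And>u. u \<in> space \<mu> \<Longrightarrow> \<pi> (T u) = fst u \<and> \<phi> (T u) = snd u"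
  shows "dGM p (\<lambda>z z'. dX (\<pi> z) (\<pi> z')) MZ dY MY \<le> proot p (gw_distortion p dX dY \<mu>)"
proof -
  have "dGM p (\<lambda>z z'. dX (\<pi> z) (\<pi> z')) MZ dY MY
      \<le> proot p (\<integral>\<^sup>+ z. \<integral>\<^sup>+ z'. ennreal (\<bar>dX (\<pi> z) (\<pi> z') - dY (\<phi> z) (\<phi> z')\<bar> powr p) \<partial>MZ \<partial>MZ)"
    unfolding dGM_def by (rule INF_lower[OF \<phi>])
  also have "\<dots> \<le> proot p (gw_distortion p dX dY \<mu>)"
  proof (rule proot_mono[OF \<open>p > 0\<close>])
    have "(\<integral>\<^sup>+ z. \<integral>\<^sup>+ z'. ennreal (\<bar>dX (\<pi> z) (\<pi> z') - dY (\<phi> z) (\<phi> z')\<bar> powr p) \<partial>MZ \<partial>MZ)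
        \<le> (\<integral>\<^sup>+ u. \<integral>\<^sup>+ v. ennreal (\<bar>dX (\<pi> (T u)) (\<pi> (T v)) - dY (\<phi> (T u)) (\<phi> (T v))\<bar> powr p) \<partial>\<mu> \<partial>\<mu>)"
      using nn_integral_nn_integral_distr_le[OF T(1),
          of "\<lambda>z z'. ennreal (\<bar>dX (\<pi> z) (\<pi> z') - dY (\<phi> z) (\<phi> z')\<bar> powr p)"]
      by (simp only: T(2))
    also have "\<dots> = gw_distortion p dX dY \<mu>"
      unfolding gw_distortion_def by (intro nn_integral_cong) (simp add: factor)
    finally show "(\<integral>\<^sup>+ z. \<integral>\<^sup>+ z'. ennreal (\<bar>dX (\<pi> z) (\<pi> z') - dY (\<phi> z) (\<phi> z')\<bar> powr p) \<partial>MZ \<partial>MZ)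
        \<le> gw_distortion p dX dY \<mu>" .
  qed
  finally show ?thesis .
qed

lemma coupling_induces_mass_splitting:
  fixes dX :: "'a \<Rightarrow> 'a \<Rightarrow> real" and dY :: "'b \<Rightarrow> 'b \<Rightarrow> real"
  assumes X: "mm_space dX MX" and Y: "mm_space dY MY" and "p > 0"
    and \<mu>: "\<mu> \<in> couplings MX MY"
  obtains dZ :: "'a \<times> real \<Rightarrow> 'a \<times> real \<Rightarrow> real" and MZ
  where "mass_splitting dZ MZ dX MX"
    and "dGM p dZ MZ dY MY \<le> proot p (gw_distortion p dX dY \<mu>)"
proof -
  obtain \<iota> :: "'b \<Rightarrow> real" where \<iota>: "inj_on \<iota> (space MY)"
    using Y Metric_space.compact_space_imp_inj_on_real unfolding mm_space_def by metis
  have \<mu>s: "sets \<mu> = sets (MX \<Otimes>\<^sub>M MY)" "prob_space \<mu>" "distr \<mu> MX fst = MX" "distr \<mu> MY snd = MY"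
    using \<mu> unfolding couplings_def by auto
  have space\<mu>: "space \<mu> = space MX \<times> space MY"
    using sets_eq_imp_space_eq[OF \<mu>s(1)] by (simp add: space_pair_measure)
  have fst\<mu>: "fst \<in> measurable \<mu> MX" and snd\<mu>: "snd \<in> measurable \<mu> MY"
    using measurable_cong_sets[OF \<mu>s(1) refl] by auto
  define T where "T u = (fst u, \<iota> (snd u))" for u :: "'a \<times> 'b"
  define MZ where "MZ = embed_measure \<mu> T"
  define \<phi> where "\<phi> z = the_inv_into (space MY) \<iota> (snd z)" for z :: "'a \<times> real"
  have "inj_on T (space \<mu>)"
    using \<iota> unfolding space\<mu> T_def inj_on_def by auto
  then have MZ: "distr \<mu> MZ T = MZ" and T: "T \<in> measurable \<mu> MZ"
    unfolding MZ_def by (simp_all add: embed_measure_eq_distr'[symmetric] measurable_embed_measure2')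
  have fstT: "fst (T u) = fst u" for u
    by (simp add: T_def)
  have \<phi>T: "\<phi> (T u) = snd u" if "u \<in> space \<mu>" for u
    using that \<iota> unfolding space\<mu> \<phi>_def T_def by (auto simp: the_inv_into_f_f)
  have fst: "fst \<in> measurable MZ MX"
    unfolding MZ_def by (rule measurable_embed_measure1) (simp add: fstT fst\<mu>)
  have \<phi>: "\<phi> \<in> measurable MZ MY"
    unfolding MZ_def
    by (rule measurable_embed_measure1) (subst measurable_cong[where g=snd], auto simp: \<phi>T snd\<mu>)
  have "distr MZ MX fst = distr \<mu> MX (fst \<circ> T)"
    using distr_distr[OF fst T] by (simp only: MZ)
  also have "\<dots> = MX"
    using \<mu>s(3) by (simp add: comp_def fstT)
  finally have distr_fst: "distr MZ MX fst = MX" .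
  have "distr MZ MY \<phi> = distr \<mu> MY (\<phi> \<circ> T)"
    using distr_distr[OF \<phi> T] by (simp only: MZ)
  also have "\<dots> = distr \<mu> MY snd"
    by (rule distr_cong) (simp_all add: \<phi>T)
  finally have \<phi>_transport: "\<phi> \<in> transport_maps MZ MY"
    using \<phi> \<mu>s(4) by (simp add: transport_maps_def)
  have "dGM p (\<lambda>z z'. dX (fst z) (fst z')) MZ dY MY \<le> proot p (gw_distortion p dX dY \<mu>)"
    by (rule dGM_pullback_le_gw_distortion[OF \<open>p > 0\<close> T MZ \<phi>_transport]) (simp add: fstT \<phi>T)
  moreover have "prob_space MZ"
    using prob_space.prob_space_distr[OF \<mu>s(2) T] by (simp only: MZ)
  moreover have "space MY \<noteq> {}"
    using Y prob_space.not_empty unfolding mm_space_def by blast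
  then have "fst ` space MZ = space MX"
    unfolding MZ_def space_embed_measure image_image fstT space\<mu> by simp
  ultimately show ?thesis
    using that mass_splitting_pullback[OF X _ fst distr_fst] by blast
qed

theorem theorem3p2:
  fixes dX :: "'a \<Rightarrow> 'a \<Rightarrow> real" and MX :: "'a measure"
    and dY :: "'b \<Rightarrow> 'b \<Rightarrow> real" and MY :: "'b measure"
    and p :: real
  assumes "mm_space dX MX" and "mm_space dY MY" and "p \<ge> 1"
  shows "(\<forall>(dZ :: 'c \<Rightarrow> 'c \<Rightarrow> real) MZ. mass_splitting dZ MZ dX MX
            \<longrightarrow> dGW p dX MX dY MY \<le> dGM p dZ MZ dY MY)
     \<and> dGW p dX MX dY MY =
         (INF Z \<in> {(dZ :: 'a \<times> real \<Rightarrow> 'a \<times> real \<Rightarrow> real, MZ). mass_splitting dZ MZ dX MX}.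
            dGM p (fst Z) (snd Z) dY MY)"
proof -
  have "p > 0"
    using assms(3) by simp
  have lower: "dGW p dX MX dY MY \<le>
      (INF Z \<in> {(dZ :: 'a \<times> real \<Rightarrow> 'a \<times> real \<Rightarrow> real, MZ). mass_splitting dZ MZ dX MX}.
         dGM p (fst Z) (snd Z) dY MY)"
    by (rule INF_greatest) (use dGW_le_dGM_mass_splitting \<open>p > 0\<close> in auto)
  have upper: "(INF Z \<in> {(dZ :: 'a \<times> real \<Rightarrow> 'a \<times> real \<Rightarrow> real, MZ). mass_splitting dZ MZ dX MX}.
         dGM p (fst Z) (snd Z) dY MY) \<le> dGW p dX MX dY MY"
    unfolding dGW_eq_INF_gw_distortion
  proof (rule INF_greatest)
    fix \<mu> assume "\<mu> \<in> couplings MX MY"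
    then obtain dZ :: "'a \<times> real \<Rightarrow> 'a \<times> real \<Rightarrow> real" and MZ
      where "mass_splitting dZ MZ dX MX" "dGM p dZ MZ dY MY \<le> proot p (gw_distortion p dX dY \<mu>)"
      using coupling_induces_mass_splitting[OF assms(1,2) \<open>p > 0\<close>] by blast
    then show "(INF Z \<in> {(dZ :: 'a \<times> real \<Rightarrow> 'a \<times> real \<Rightarrow> real, MZ). mass_splitting dZ MZ dX MX}.
        dGM p (fst Z) (snd Z) dY MY) \<le> proot p (gw_distortion p dX dY \<mu>)"
      by (intro INF_lower2[of "(dZ, MZ)"]) simp_all
  qed
  show ?thesis
    using dGW_le_dGM_mass_splitting[OF _ \<open>p > 0\<close>] antisym[OF lower upper] by blast
qed

end
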